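(* Let $\gamma>0$ and let $H$ be a $3$-graph of order $n$ with $\delta_2(H)\ge(1/2-\gamma)n$. Suppose $X,Y$ is a bipartition of $V(H)$ and $\{x,x',y,y'\}$ spans a copy of $K_4^3$ in $H$ with $x,x'\in X$ and $y,y'\in Y$. Then at least one of the following holds: (a) $\{x,x',y,y'\}$ is contained in at least $\gamma n/4$ $5$-sets that span $(X,Y)$-bridges of length $1$; (b) $(1/2-4\gamma)n\le|X|,|Y|\le(1/2+4\gamma)n$ and $xx'y$ is $(9\gamma,X,Y)$-typical.
   Context: $\delta_2(H)$ is the minimum over pairs of distinct vertices of the number of edges containing the pair. $K_4^3$ is the complete $3$-graph on $4$ vertices; $K_4^-$ is the $3$-graph with $4$ vertices and $3$ edges. A set $S$ is an $(x,y)$-connector of length $1$ if $S\cap\{x,y\}=\emptyset$, $|S|=3$, and both $S\cup\{x\}$ and $S\cup\{y\}$ span copies of $K_4^-$ in $H$. A triple $(x_0,y_0,S)$ is an $(X,Y)$-bridge of length $1$ if $x_0\in X$, $y_0\in Y$ and $S$ is an $(x_0,y_0)$-connector of length $1$; a $5$-set $Z$ spans an $(X,Y)$-bridge of length $1$ if $Z=S\cup\{x_0,y_0\}$ for some such bridge. Write $N(uv)$ for the set of vertices $w$ with $uvw\in E(H)$, $N(uv,Z)=N(uv)\cap Z$ and $\deg(uv,Z)=|N(uv,Z)|$. For $\rho>0$, a triple $xx'y$ with $x,x'\in X$, $y\in Y$ is $(\rho,X,Y)$-typical if (T1) $\deg(xx',Y)\ge|Y|-\rho n$, (T2) $|N(xy,X)\cap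 N(x'y,X)|\le\rho n$, and (T3) $|X|-\rho n\le\deg(xy,X)+\deg(x'y,X)$. *)

theory Defs
  imports Complex_Main
begin

definition three_graph :: "'a set \<Rightarrow> 'a set set \<Rightarrow> bool" where
  "three_graph V E \<longleftrightarrow> finite V \<and> (\<forall>e\<in>E. e \<subseteq> V \<and> card e = 3)"

definition nbhd :: "'a set \<Rightarrow> 'a set set \<Rightarrow> 'a \<Rightarrow> 'a \<Rightarrow> 'a set" where
  "nbhd V E u v = {w \<in> V. {u, v, w} \<in> E}"

definition deg_in :: "'a set \<Rightarrow> 'a set set \<Rightarrow> 'a \<Rightarrow> 'a \<Rightarrow> 'a set \<Rightarrow> nat" where
  "deg_in V E u v Z = card (nbhd V E u v \<inter> Z)"

definition min_codeg_ge :: "'a set \<Rightarrow> 'a set set \<Rightarrow> real \<Rightarrow> bool" where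
  "min_codeg_ge V E d \<longleftrightarrow> (\<forall>u\<in>V. \<forall>v\<in>V. u \<noteq> v \<longrightarrow> real (card (nbhd V E u v)) \<ge> d)"

definition spans_K4 :: "'a set set \<Rightarrow> 'a set \<Rightarrow> bool" where
  "spans_K4 E T \<longleftrightarrow> card T = 4 \<and> (\<forall>e. e \<subseteq> T \<and> card e = 3 \<longrightarrow> e \<in> E)"

definition spans_K4minus :: "'a set set \<Rightarrow> 'a set \<Rightarrow> bool" where
  "spans_K4minus E T \<longleftrightarrow> card T = 4 \<and> card {e \<in> E. e \<subseteq> T} \<ge> 3"

definition connector1 :: "'a set \<Rightarrow> 'a set set \<Rightarrow> 'a \<Rightarrow> 'a \<Rightarrow> 'a set \<Rightarrow> bool" where
  "connector1 V E x y S \<longleftrightarrow> S \<subseteq> V \<and> S \<inter> {x, y} = {} \<and> card S = 3 \<and>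
     spans_K4minus E (insert x S) \<and> spans_K4minus E (insert y S)"

definition bridge1 :: "'a set \<Rightarrow> 'a set set \<Rightarrow> 'a set \<Rightarrow> 'a set \<Rightarrow> 'a \<Rightarrow> 'a \<Rightarrow> 'a set \<Rightarrow> bool" where
  "bridge1 V E X Y x0 y0 S \<longleftrightarrow> x0 \<in> X \<and> y0 \<in> Y \<and> connector1 V E x0 y0 S"

definition spans_bridge1 :: "'a set \<Rightarrow> 'a set set \<Rightarrow> 'a set \<Rightarrow> 'a set \<Rightarrow> 'a set \<Rightarrow> bool" where
  "spans_bridge1 V E X Y Z \<longleftrightarrow> card Z = 5 \<and>
     (\<exists>x0 y0 S. bridge1 V E X Y x0 y0 S \<and> Z = S \<union> {x0, y0})"

definition typical :: "'a set \<Rightarrow> 'a set set \<Rightarrow> real \<Rightarrow> 'a set \<Rightarrow> 'a set \<Rightarrow> 'a \<Rightarrow> 'a \<Rightarrow> 'a \<Rightarrow> bool" where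
  "typical V E \<rho> X Y x x' y \<longleftrightarrow>
     x \<in> X \<and> x' \<in> X \<and> y \<in> Y \<and>
     real (deg_in V E x x' Y) \<ge> real (card Y) - \<rho> * real (card V) \<and>
     real (card (nbhd V E x y \<inter> X \<inter> (nbhd V E x' y \<inter> X))) \<le> \<rho> * real (card V) \<and>
     real (card X) - \<rho> * real (card V) \<le> real (deg_in V E x y X) + real (deg_in V E x' y X)"

end

theory Submission
  imports Defs
begin

text \<open>Call a vertex \<open>v\<close> outside \<open>K = {x, x', y, y'}\<close> good if it forms a \<open>K\<^sub>4\<^sup>-\<close> with a
  triple \<open>S \<subset> K\<close> whose fourth vertex lies on the other side of the partition: then
  \<open>K \<union> {v}\<close> spans a bridge, with \<open>v\<close> and \<open>K - S\<close> as its ends and \<open>S\<close> as connector.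
  Distinct good vertices give distinct such 5-sets. A vertex that is not good lies in at most
  one of the three links of each of these triples. Summing over all vertices, the six link
  sizes of pairs in \<open>K\<close>, each at least \<open>(1/2 - \<gamma>) n\<close>, leave room for fewer than \<open>\<gamma> n/4\<close>
  good vertices only if \<open>|X|, |Y| \<approx> n/2\<close>, the link of \<open>xx'\<close> covers almost all of \<open>Y\<close>, and
  almost every vertex of \<open>X\<close> lies in exactly one of the links of \<open>xy\<close> and \<open>x'y\<close>.\<close>

lemma spans_K4minus_if_three_edges:
  assumes "card T = 4" and "{a, b, c} \<subseteq> E" and "a \<subseteq> T" "b \<subseteq> T" "c \<subseteq> T"
    and "a \<noteq> b" "a \<noteq> c" "b \<noteq> c"
  shows "spans_K4minus E T"
proof -
  have "finite T" using \<open>card T = 4\<close> by (metis card.infinite zero_neq_numeral)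
  then have "finite {e \<in> E. e \<subseteq> T}" by (simp add: finite_subset[of _ "Pow T"] subset_eq)
  moreover have "{a, b, c} \<subseteq> {e \<in> E. e \<subseteq> T}" using assms by auto
  ultimately have "card {a, b, c} \<le> card {e \<in> E. e \<subseteq> T}" by (rule card_mono)
  then show ?thesis using assms by (simp add: spans_K4minus_def)
qed

lemma spans_K4_imp_spans_K4minus:
  assumes "spans_K4 E T" shows "spans_K4minus E T"
proof -
  have "card T = 4" using assms by (simp add: spans_K4_def)
  then have "finite T" by (metis card.infinite zero_neq_numeral)
  then have "finite {e \<in> E. e \<subseteq> T}" by (simp add: finite_subset[of _ "Pow T"] subset_eq)
  moreover have "{B. B \<subseteq> T \<and> card B = 3} \<subseteq> {e \<in> E. e \<subseteq> T}"
    using assms by (auto simp: spans_K4_def)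
  ultimately have "card {B. B \<subseteq> T \<and> card B = 3} \<le> card {e \<in> E. e \<subseteq> T}"
    by (rule card_mono)
  moreover have "card {B. B \<subseteq> T \<and> card B = 3} = 4"
    using n_subsets[OF \<open>finite T\<close>, of 3] \<open>card T = 4\<close> by (simp add: numeral_eq_Suc)
  ultimately show ?thesis using \<open>card T = 4\<close> by (simp add: spans_K4minus_def)
qed

lemma spans_K4minus_insert_if_two_links:
  assumes "{a, b, c} \<in> E" and "distinct [v, a, b, c]"
    and "(v \<in> nbhd V E a b \<and> v \<in> nbhd V E a c) \<or> (v \<in> nbhd V E a b \<and> v \<in> nbhd V E b c)
      \<or> (v \<in> nbhd V E a c \<and> v \<in> nbhd V E b c)"
  shows "spans_K4minus E (insert v {a, b, c})"
proof -
  have "card (insert v {a, b, c}) = 4" using assms(2) by simp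
  from assms(3) consider "{a, b, v} \<in> E" "{a, c, v} \<in> E" | "{a, b, v} \<in> E" "{b, c, v} \<in> E"
    | "{a, c, v} \<in> E" "{b, c, v} \<in> E"
    by (auto simp: nbhd_def)
  then show ?thesis
  proof cases
    case 1
    show ?thesis
      by (rule spans_K4minus_if_three_edges[of _ "{a, b, c}" "{a, b, v}" "{a, c, v}"])
        (use 1 assms in auto)
  next
    case 2
    show ?thesis
      by (rule spans_K4minus_if_three_edges[of _ "{a, b, c}" "{a, b, v}" "{b, c, v}"])
        (use 2 assms in auto)
  next
    case 3
    show ?thesis
      by (rule spans_K4minus_if_three_edges[of _ "{a, b, c}" "{a, c, v}" "{b, c, v}"])
        (use 3 assms in auto)
  qed
qed

lemma spans_bridge1_insert:
  assumes "x0 \<in> X" "y0 \<in> Y" "X \<inter> Y = {}" "S \<subseteq> V" "card S = 3" "x0 \<notin> S" "y0 \<notin> S"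
    and "spans_K4minus E (insert x0 S)" "spans_K4minus E (insert y0 S)"
  shows "spans_bridge1 V E X Y (S \<union> {x0, y0})"
proof -
  have "finite S" using assms(5) by (metis card.infinite zero_neq_numeral)
  moreover have "x0 \<noteq> y0" using assms by blast
  ultimately have "card (S \<union> {x0, y0}) = 5" using assms by simp
  moreover have "bridge1 V E X Y x0 y0 S"
    using assms by (auto simp: bridge1_def connector1_def)
  ultimately show ?thesis by (auto simp: spans_bridge1_def)
qed

lemma three_graph_not_in_nbhd:
  assumes "three_graph V E" shows "u \<notin> nbhd V E u v" "v \<notin> nbhd V E u v"
proof -
  have "card {u, v} \<noteq> 3" by (simp add: card_insert_if)
  then show "u \<notin> nbhd V E u v" "v \<notin> nbhd V E u v"
    using assms by (auto simp: three_graph_def nbhd_def insert_commute)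
qed

lemma link_indicators_le_one:
  assumes "{a, b, c} \<in> E" and "distinct [v, a, b, c]" and "\<not> spans_K4minus E (insert v {a, b, c})"
  shows "of_bool (v \<in> nbhd V E a b) + of_bool (v \<in> nbhd V E a c) + of_bool (v \<in> nbhd V E b c)
    \<le> (1::real)"
  using spans_K4minus_insert_if_two_links[OF assms(1,2), of V] assms(3) by auto

locale K4_across_partition =
  fixes V :: "'a set" and E :: "'a set set" and X Y :: "'a set" and x x' y y' :: 'a
  assumes three_graph: "three_graph V E"
    and partition: "X \<union> Y = V" "X \<inter> Y = {}"
    and in_parts: "x \<in> X" "x' \<in> X" "y \<in> Y" "y' \<in> Y"
    and spans_K4: "spans_K4 E {x, x', y, y'}"
begin

abbreviation N :: "'a \<Rightarrow> 'a \<Rightarrow> 'a set" where "N \<equiv> nbhd V E"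

abbreviation K :: "'a set" where "K \<equiv> {x, x', y, y'}"

lemma finite_V: "finite V"
  using three_graph by (simp add: three_graph_def)

lemma distinct_K: "distinct [x, x', y, y']"
  using spans_K4 by (auto simp: spans_K4_def card_insert_if split: if_splits)

lemma K_subset_V: "K \<subseteq> V"
  using partition in_parts by auto

lemma N_subset_V: "N u w \<subseteq> V"
  by (auto simp: nbhd_def)

lemma K_edges: "{x, x', y} \<in> E" "{x, x', y'} \<in> E" "{x, y, y'} \<in> E" "{x', y, y'} \<in> E"
  using spans_K4 distinct_K by (auto simp: spans_K4_def)

lemma K_in_N:
  assumes "{u, w, v} \<subseteq> K" and "distinct [u, w, v]"
  shows "v \<in> N u w"
  using assms spans_K4 K_subset_V by (auto simp: spans_K4_def nbhd_def)

definition good :: "'a set" where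
  "good = {v \<in> V - K.
     v \<in> X \<and> (spans_K4minus E (insert v {x, x', y}) \<or> spans_K4minus E (insert v {x, x', y'})) \<or>
     v \<in> Y \<and> (spans_K4minus E (insert v {x, y, y'}) \<or> spans_K4minus E (insert v {x', y, y'}))}"

lemma good_spans_bridge1:
  assumes "v \<in> good" shows "spans_bridge1 V E X Y (insert v K)"
proof -
  have v: "v \<in> V" "v \<notin> K" using assms by (auto simp: good_def)
  have K4minus: "spans_K4minus E K" by (rule spans_K4_imp_spans_K4minus[OF spans_K4])
  have bridge: "spans_bridge1 V E X Y (S \<union> {x0, y0})"
    if "x0 \<in> X" "y0 \<in> Y" "S \<subseteq> K" "card S = 3" "x0 \<notin> S" "y0 \<notin> S"
      and "spans_K4minus E (insert x0 S)" "spans_K4minus E (insert y0 S)" for x0 y0 S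
    by (rule spans_bridge1_insert) (use that partition K_subset_V in auto)
  from assms consider
      "v \<in> X" "spans_K4minus E (insert v {x, x', y})"
    | "v \<in> X" "spans_K4minus E (insert v {x, x', y'})"
    | "v \<in> Y" "spans_K4minus E (insert v {x, y, y'})"
    | "v \<in> Y" "spans_K4minus E (insert v {x', y, y'})"
    by (auto simp: good_def)
  then show ?thesis
  proof cases
    case 1
    then have "spans_bridge1 V E X Y ({x, x', y} \<union> {v, y'})"
      by (intro bridge) (use v in_parts distinct_K K4minus in \<open>auto simp: insert_commute\<close>)
    then show ?thesis by (simp add: insert_commute)
  next
    case 2
    then have "spans_bridge1 V E X Y ({x, x', y'} \<union> {v, y})"
      by (intro bridge) (use v in_parts distinct_K K4minus in \<open>auto simp: insert_commute\<close>)
    then show ?thesis by (simp add: insert_commute)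
  next
    case 3
    then have "spans_bridge1 V E X Y ({x, y, y'} \<union> {x', v})"
      by (intro bridge) (use v in_parts distinct_K K4minus in \<open>auto simp: insert_commute\<close>)
    then show ?thesis by (simp add: insert_commute)
  next
    case 4
    then have "spans_bridge1 V E X Y ({x', y, y'} \<union> {x, v})"
      by (intro bridge) (use v in_parts distinct_K K4minus in \<open>auto simp: insert_commute\<close>)
    then show ?thesis by (simp add: insert_commute)
  qed
qed

lemma card_good_le: "card good \<le> card {Z. K \<subseteq> Z \<and> spans_bridge1 V E X Y Z}"
proof (rule card_inj_on_le)
  show "inj_on (\<lambda>v. insert v K) good"
    by (rule inj_onI) (auto simp: good_def)
  show "(\<lambda>v. insert v K) ` good \<subseteq> {Z. K \<subseteq> Z \<and> spans_bridge1 V E X Y Z}"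
    using good_spans_bridge1 by auto
  show "finite {Z. K \<subseteq> Z \<and> spans_bridge1 V E X Y Z}"
    by (rule finite_subset[of _ "Pow V"])
      (use finite_V partition in \<open>auto simp: spans_bridge1_def bridge1_def connector1_def\<close>)
qed

lemma not_good_link_indicators:
  assumes "v \<in> V - K - good"
  shows "v \<in> X \<Longrightarrow> of_bool (v \<in> N x x') + of_bool (v \<in> N x y) + of_bool (v \<in> N x' y)
      \<le> (1::real)"
    and "v \<in> X \<Longrightarrow> of_bool (v \<in> N x x') + of_bool (v \<in> N x y') + of_bool (v \<in> N x' y')
      \<le> (1::real)"
    and "v \<in> Y \<Longrightarrow> of_bool (v \<in> N x y) + of_bool (v \<in> N x y') + of_bool (v \<in> N y y')
      \<le> (1::real)"
    and "v \<in> Y \<Longrightarrow> of_bool (v \<in> N x' y) + of_bool (v \<in> N x' y') + of_bool (v \<in> N y y')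
      \<le> (1::real)"
  using assms distinct_K
  by (auto simp: good_def split del: split_of_bool intro!: link_indicators_le_one K_edges)

definition uncovered_X :: "'a set" where
  "uncovered_X = {v \<in> X - K - good. v \<notin> N x y \<and> v \<notin> N x' y}"

definition uncovered_Y :: "'a set" where
  "uncovered_Y = {v \<in> Y - K - good. v \<notin> N x x'}"

lemma link_indicator_bounds:
  assumes "v \<in> V"
  shows "2 * of_bool (v \<in> N x x') + of_bool (v \<in> N x y) + of_bool (v \<in> N x' y)
      + of_bool (v \<in> N x y') + of_bool (v \<in> N x' y')
      \<le> (2::real) + 2 * of_bool (v \<in> Y) + 4 * of_bool (v \<in> good)" (is ?via_xx)
    and "2 * of_bool (v \<in> N y y') + of_bool (v \<in> N x y) + of_bool (v \<in> N x' y)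
      + of_bool (v \<in> N x y') + of_bool (v \<in> N x' y')
      \<le> (2::real) + 2 * of_bool (v \<in> X) + 4 * of_bool (v \<in> good)" (is ?via_yy)
    and "of_bool (v \<in> N x x') + of_bool (v \<in> N y y') + of_bool (v \<in> N x y) + of_bool (v \<in> N x' y)
      + of_bool (v \<in> N x y') + of_bool (v \<in> N x' y')
      + of_bool (v \<in> uncovered_X) + of_bool (v \<in> uncovered_Y)
      \<le> (3::real) + 3 * of_bool (v \<in> good)" (is ?total)
proof -
  consider "v \<in> K" | "v \<in> good" | "v \<in> X - K - good" | "v \<in> Y - K - good"
    using assms partition by auto
  then have "?via_xx \<and> ?via_yy \<and> ?total"
  proof cases
    case 1
    have "v \<notin> good" "v \<notin> uncovered_X" "v \<notin> uncovered_Y"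
      using 1 by (auto simp: good_def uncovered_X_def uncovered_Y_def)
    with 1 show ?thesis
      using distinct_K in_parts partition three_graph_not_in_nbhd[OF three_graph]
      by (auto simp: K_in_N)
  next
    case 2
    then show ?thesis
      using partition by (auto simp: good_def uncovered_X_def uncovered_Y_def)
  next
    case 3
    then show ?thesis
      using not_good_link_indicators(1,2)[of v] assms partition
      by (auto simp: uncovered_X_def uncovered_Y_def split: split_of_bool_asm)
  next
    case 4
    then show ?thesis
      using not_good_link_indicators(3,4)[of v] assms partition
      by (auto simp: uncovered_X_def uncovered_Y_def split: split_of_bool_asm)
  qed
  then show ?via_xx ?via_yy ?total by blast+
qed

lemma subsets_V: "good \<subseteq> V" "uncovered_X \<subseteq> V" "uncovered_Y \<subseteq> V" "X \<subseteq> V" "Y \<subseteq> V"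
  using partition by (auto simp: good_def uncovered_X_def uncovered_Y_def)

lemma link_indicator_sums:
  "(\<Sum>v\<in>V. 2 * of_bool (v \<in> N x x') + of_bool (v \<in> N x y) + of_bool (v \<in> N x' y)
      + of_bool (v \<in> N x y') + of_bool (v \<in> N x' y'))
    \<le> (\<Sum>v\<in>V. (2::real) + 2 * of_bool (v \<in> Y) + 4 * of_bool (v \<in> good))"
  "(\<Sum>v\<in>V. 2 * of_bool (v \<in> N y y') + of_bool (v \<in> N x y) + of_bool (v \<in> N x' y)
      + of_bool (v \<in> N x y') + of_bool (v \<in> N x' y'))
    \<le> (\<Sum>v\<in>V. (2::real) + 2 * of_bool (v \<in> X) + 4 * of_bool (v \<in> good))"
  "(\<Sum>v\<in>V. of_bool (v \<in> N x x') + of_bool (v \<in> N y y') + of_bool (v \<in> N x y)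
      + of_bool (v \<in> N x' y) + of_bool (v \<in> N x y') + of_bool (v \<in> N x' y')
      + of_bool (v \<in> uncovered_X) + of_bool (v \<in> uncovered_Y))
    \<le> (\<Sum>v\<in>V. (3::real) + 3 * of_bool (v \<in> good))"
  by (intro sum_mono link_indicator_bounds; assumption)+

lemma link_degree_sums:
  "2 * real (card (N x x')) + card (N x y) + card (N x' y) + card (N x y') + card (N x' y')
    \<le> 2 * card V + 2 * card Y + 4 * card good"
  "2 * real (card (N y y')) + card (N x y) + card (N x' y) + card (N x y') + card (N x' y')
    \<le> 2 * card V + 2 * card X + 4 * card good"
  "real (card (N x x')) + card (N y y') + card (N x y) + card (N x' y) + card (N x y') + card (N x' y')
    + card uncovered_X + card uncovered_Y \<le> 3 * card V + 3 * card good"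
  using link_indicator_sums finite_V subsets_V N_subset_V
  by (simp_all add: sum.distrib sum_distrib_left[symmetric] Int_absorb1)

lemma card_Y_le: "card Y \<le> card (N x x' \<inter> Y) + card good + card uncovered_Y"
proof -
  have "Y \<subseteq> (N x x' \<inter> Y) \<union> good \<union> uncovered_Y"
    using K_in_N distinct_K in_parts partition by (auto simp: uncovered_Y_def)
  then have "card Y \<le> card ((N x x' \<inter> Y) \<union> good \<union> uncovered_Y)"
    using finite_V subsets_V by (intro card_mono) (auto intro: finite_subset)
  also have "\<dots> \<le> card (N x x' \<inter> Y) + card good + card uncovered_Y"
    by (meson add_le_mono card_Un_le le_refl order_trans)
  finally show ?thesis .
qed

lemma card_X_le:
  "card X \<le> card (N x y \<inter> X) + card (N x' y \<inter> X) + card good + card uncovered_X"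
proof -
  have "X \<subseteq> (N x y \<inter> X) \<union> (N x' y \<inter> X) \<union> good \<union> uncovered_X"
    using K_in_N distinct_K in_parts partition by (auto simp: uncovered_X_def)
  then have "card X \<le> card ((N x y \<inter> X) \<union> (N x' y \<inter> X) \<union> good \<union> uncovered_X)"
    using finite_V subsets_V by (intro card_mono) (auto intro: finite_subset)
  also have "\<dots> \<le> card (N x y \<inter> X) + card (N x' y \<inter> X) + card good + card uncovered_X"
    by (meson add_le_mono card_Un_le le_refl order_trans)
  finally show ?thesis .
qed

lemma common_link_subset_good: "N x y \<inter> X \<inter> (N x' y \<inter> X) \<subseteq> good"
proof
  fix v assume v: "v \<in> N x y \<inter> X \<inter> (N x' y \<inter> X)"
  then have "v \<in> V - K"
    using three_graph_not_in_nbhd[OF three_graph] in_parts partition by (auto simp: nbhd_def)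
  moreover have "spans_K4minus E (insert v {x, x', y})"
    using v \<open>v \<in> V - K\<close> distinct_K K_edges by (intro spans_K4minus_insert_if_two_links) auto
  ultimately show "v \<in> good" using v by (auto simp: good_def)
qed

lemma balanced_and_typical_if_few_good:
  fixes \<gamma> :: real
  defines "n \<equiv> card V"
  assumes codegree: "min_codeg_ge V E ((1/2 - \<gamma>) * n)" and few_good: "card good < \<gamma> * n / 4"
  shows "(1/2 - 4*\<gamma>) * n \<le> card X \<and> card X \<le> (1/2 + 4*\<gamma>) * n \<and>
    (1/2 - 4*\<gamma>) * n \<le> card Y \<and> card Y \<le> (1/2 + 4*\<gamma>) * n \<and>
    typical V E (9*\<gamma>) X Y x x' y"
proof -
  have link_degree: "n/2 - \<gamma> * n \<le> card (N u w)" if "{u, w} \<subseteq> K" "u \<noteq> w" for u w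
    using codegree that K_subset_V by (auto simp: min_codeg_ge_def algebra_simps)
  then have "n/2 - \<gamma> * n \<le> card (N x x')" "n/2 - \<gamma> * n \<le> card (N y y')"
    "n/2 - \<gamma> * n \<le> card (N x y)" "n/2 - \<gamma> * n \<le> card (N x' y)"
    "n/2 - \<gamma> * n \<le> card (N x y')" "n/2 - \<gamma> * n \<le> card (N x' y')"
    using distinct_K by auto
  note link_degrees = this link_degree_sums[folded n_def]
  have "card X + card Y = n"
    using finite_V subsets_V partition card_Un_disjoint[of X Y] by (simp add: n_def finite_subset)
  moreover have "n/2 - 4 * \<gamma> * n \<le> card X" "n/2 - 4 * \<gamma> * n \<le> card Y"
    using link_degrees few_good by linarith+
  ultimately have sizes: "(1/2 - 4*\<gamma>) * n \<le> card X \<and> card X \<le> (1/2 + 4*\<gamma>) * n \<and>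
      (1/2 - 4*\<gamma>) * n \<le> card Y \<and> card Y \<le> (1/2 + 4*\<gamma>) * n"
    by (simp add: algebra_simps)
  have uncovered: "card uncovered_X + card uncovered_Y \<le> 6 * \<gamma> * n + 3 * card good"
    using link_degrees by linarith
  have "card (N x y \<inter> X \<inter> (N x' y \<inter> X)) \<le> card good"
    using finite_subset[OF subsets_V(1) finite_V] by (rule card_mono) (rule common_link_subset_good)
  then have "typical V E (9*\<gamma>) X Y x x' y"
    unfolding typical_def deg_in_def n_def[symmetric]
    using in_parts card_X_le card_Y_le uncovered few_good by auto
  with sizes show ?thesis by blast
qed

end

theorem lemma5p10:
  fixes V :: "'a set" and E :: "'a set set" and X Y :: "'a set"
    and x x' y y' :: 'a and \<gamma> :: real and n :: nat
  assumes "\<gamma> > 0"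
    and "three_graph V E"
    and "n = card V"
    and "min_codeg_ge V E ((1/2 - \<gamma>) * real n)"
    and "X \<union> Y = V" and "X \<inter> Y = {}"
    and "x \<in> X" and "x' \<in> X" and "y \<in> Y" and "y' \<in> Y"
    and "spans_K4 E {x, x', y, y'}"
  shows "real (card {Z. {x, x', y, y'} \<subseteq> Z \<and> spans_bridge1 V E X Y Z}) \<ge> \<gamma> * real n / 4
     \<or> ((1/2 - 4*\<gamma>) * real n \<le> real (card X) \<and> real (card X) \<le> (1/2 + 4*\<gamma>) * real n \<and>
        (1/2 - 4*\<gamma>) * real n \<le> real (card Y) \<and> real (card Y) \<le> (1/2 + 4*\<gamma>) * real n \<and>
        typical V E (9*\<gamma>) X Y x x' y)"
proof -
  interpret K4_across_partition V E X Y x x' y y'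
    using assms(2,5-11) by unfold_locales
  show ?thesis
  proof (cases "card good < \<gamma> * n / 4")
    case True
    then show ?thesis
      using balanced_and_typical_if_few_good assms(3,4) by blast
  next
    case False
    moreover have "real (card good) \<le> card {Z. K \<subseteq> Z \<and> spans_bridge1 V E X Y Z}"
      using card_good_le by simp
    ultimately show ?thesis by simp
  qed
qed

end
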